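(* Let $n\ge2$ and let $\mathfrak G_n$, $\mathcal G_n$, $\iota_n$, $\mathcal N_{0,n}$, $z_g$, $U_m(z_g)$ and $\mathfrak H_{j,n}$ be as in the context. Let $m\ge1$ and let $K\in\{\mathfrak H_{j,n},\ \mathcal N_{0,n}\setminus\mathfrak H_{j,n}: j=0,\dots,2^n-2\}$. Set $$M_K=\Bigl(\bigcap_{g\in K}U_m(z_g)\Bigr)\setminus\bigcup_{h\in\mathcal N_{0,n}\setminus K}U_m(z_h).$$ Then $M_K=\bigcap_{g\in K}U_m(z_g)$.
   Context: Let $X=\{\mathbf 0,\mathbf 1\}$, $X^*$ the finite words (with empty word $\varnothing$), $X^\omega$ the infinite words with the product topology, $C(\eta)=\{\eta w:w\in X^\omega\}$, $\mathbf 1^m$ the word of $m$ ones and $\mathbf 1^\infty$ the infinite word of ones. Fix $n\ge2$, a primitive polynomial $f_n$ of degree $n$ over $\mathbb F_2$ with root $\alpha$ (so $\mathbb F_{2^n}=\mathbb F_2(\alpha)$, $\alpha$ generates $\mathbb F_{2^n}^*$), and $\operatorname{Tr}(\beta)=\beta+\beta^2+\dots+\beta^{2^{n-1}}\in\mathbb F_2$. $\mathfrak G_n$ is the group of automorphisms of the binary rooted tree $X^*$ generated by $a$ ($a\cdot(\mathbf 0w)=\mathbf 1w$, $a\cdot(\mathbf 1w)=\mathbf 0w$) and $\iota_n(\beta)$, $\beta\in\mathbb F_{2^n}$, where $\iota_n(\beta)\cdot(\mathbf 0w)=\mathbf 0(a^{\operatorname{Tr}(\beta)}\cdot w)$ and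 $\iota_n(\beta)\cdot(\mathbf 1w)=\mathbf 1(\iota_n(\alpha\beta)\cdot w)$; $\iota_n$ is an injective homomorphism of $(\mathbb F_{2^n},+)$ into $\mathfrak G_n$ and $e=\iota_n(0)$. Restrictions $g|_x$ are defined by $g\cdot(xw)=(g\cdot x)(g|_x\cdot w)$ and extended to words. Let $\mathcal N_{0,n}=\iota_n(\mathbb F_{2^n})$. For $j=0,\dots,2^n-2$ let $\mathfrak H_{j,n}=\iota_n(\{\beta:\operatorname{Tr}(\alpha^j\beta)=0\})$, a subgroup of order $2^{n-1}$. $\mathcal G_n$ is the groupoid of germs of the action of the inverse semigroup $\{(\eta,g,\mu):\eta,\mu\in X^*,g\in\mathfrak G_n\}\cup\{0\}$ on $X^\omega$, where $(\eta,g,\mu)$ maps $C(\mu)\to C(\eta)$ by $\mu w\mapsto\eta(g\cdot w)$: elements are germs $[(\eta,g,\mu),w]$ with $w\in C(\mu)$, and $[(\eta,g,\mu),w]=[(\eta',g',\mu'),w']$ iff $w=w'$ and there is a finite prefix $\nu$ of $w$ with $\nu=\mu\epsilon=\mu'\epsilon'$, $\eta(g\cdot\epsilon)=\eta'(g'\cdot\epsilon')$ and $g|_\epsilon=g'|_{\epsilon'}$. For $s=(\eta,g,\mu)$ and open $U\subseteq C(\mu)$ let $\Theta(s,U)=\{[s,w]:w\in U\}$; these are open bisections forming a basis of the topology. For $g\in\mathfrak G_n$ let $z_g=[(\varnothing,g,\varnothing),\mathbf 1^\infty]$ and $U_m(z_g)=\Theta((\varnothing,g,\varnothing),C(\mathbf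 1^m))$, a compact open bisection containing $z_g$. *)

theory Defs
  imports Main
begin

text \<open>Letters: False = 0, True = 1. Finite words: bool list.
  The field F_{2^n} is an abstract finite field 'f with 2^n elements; alpha is a
  generator of its multiplicative group (a root of the primitive polynomial f_n).\<close>

type_synonym fword = "bool list"
type_synonym iword = "nat \<Rightarrow> bool"
type_synonym aut = "fword \<Rightarrow> fword"

definition conc :: "fword \<Rightarrow> iword \<Rightarrow> iword" where
  "conc \<eta> w = (\<lambda>i. if i < length \<eta> then \<eta> ! i else w (i - length \<eta>))"

definition cyl :: "fword \<Rightarrow> iword set" where
  "cyl \<eta> = {conc \<eta> w | w. True}"

definition ones :: "nat \<Rightarrow> fword" where
  "ones m = replicate m True"

definition ipref :: "nat \<Rightarrow> iword \<Rightarrow> fword" where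
  "ipref k w = map w [0..<k]"

definition act_inf :: "aut \<Rightarrow> iword \<Rightarrow> iword" where
  "act_inf g w = (\<lambda>i. g (ipref (Suc i) w) ! i)"

definition restr :: "aut \<Rightarrow> fword \<Rightarrow> aut" where
  "restr g x = (\<lambda>v. drop (length x) (g (x @ v)))"

fun a_aut :: aut where
  "a_aut [] = []"
| "a_aut (x # w) = (\<not> x) # w"

text \<open>Absolute trace F_{2^n} \<rightarrow> F_2 (values 0 or 1 in the field).\<close>
definition tr :: "nat \<Rightarrow> 'f::field \<Rightarrow> 'f" where
  "tr n \<beta> = (\<Sum>i<n. \<beta> ^ (2 ^ i))"

fun iota :: "nat \<Rightarrow> 'f::field \<Rightarrow> 'f \<Rightarrow> aut" where
  "iota n \<alpha> \<beta> [] = []"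
| "iota n \<alpha> \<beta> (x # w) =
     (if x then True # iota n \<alpha> (\<alpha> * \<beta>) w
      else False # (if tr n \<beta> = 1 then a_aut w else w))"

inductive_set GG :: "nat \<Rightarrow> 'f::field \<Rightarrow> aut set" for n \<alpha> where
  GG_id: "id \<in> GG n \<alpha>"
| GG_a: "a_aut \<in> GG n \<alpha>"
| GG_iota: "iota n \<alpha> \<beta> \<in> GG n \<alpha>"
| GG_comp: "g \<in> GG n \<alpha> \<Longrightarrow> h \<in> GG n \<alpha> \<Longrightarrow> g \<circ> h \<in> GG n \<alpha>"
| GG_inv: "g \<in> GG n \<alpha> \<Longrightarrow> inv g \<in> GG n \<alpha>"

text \<open>Elements (eta, g, mu) of the inverse semigroup (the zero plays no role for germs).\<close>
type_synonym triple = "fword \<times> aut \<times> fword"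

definition valid_triple :: "nat \<Rightarrow> 'f::field \<Rightarrow> triple \<Rightarrow> bool" where
  "valid_triple n \<alpha> s = (fst (snd s) \<in> GG n \<alpha>)"

definition germ_eq :: "triple \<Rightarrow> iword \<Rightarrow> triple \<Rightarrow> iword \<Rightarrow> bool" where
  "germ_eq s w s' w' =
     (case s of (\<eta>, g, \<mu>) \<Rightarrow> case s' of (\<eta>', g', \<mu>') \<Rightarrow>
       w = w' \<and>
       (\<exists>k \<epsilon> \<epsilon>'. ipref k w = \<mu> @ \<epsilon> \<and> ipref k w = \<mu>' @ \<epsilon>' \<and>
          \<eta> @ g \<epsilon> = \<eta>' @ g' \<epsilon>' \<and> restr g \<epsilon> = restr g' \<epsilon>'))"

text \<open>The germ [s,w], represented as its equivalence class of pairs (s',w').\<close>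
definition germ :: "nat \<Rightarrow> 'f::field \<Rightarrow> triple \<Rightarrow> iword \<Rightarrow> (triple \<times> iword) set" where
  "germ n \<alpha> s w = {(s', w'). valid_triple n \<alpha> s' \<and> w' \<in> cyl (snd (snd s')) \<and> germ_eq s w s' w'}"

definition Theta :: "nat \<Rightarrow> 'f::field \<Rightarrow> triple \<Rightarrow> iword set \<Rightarrow> (triple \<times> iword) set set" where
  "Theta n \<alpha> s U = {germ n \<alpha> s w | w. w \<in> U}"

definition Um :: "nat \<Rightarrow> 'f::field \<Rightarrow> nat \<Rightarrow> aut \<Rightarrow> (triple \<times> iword) set set" where
  "Um n \<alpha> m g = Theta n \<alpha> ([], g, []) (cyl (ones m))"

definition N0 :: "nat \<Rightarrow> 'f::field \<Rightarrow> aut set" where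
  "N0 n \<alpha> = range (iota n \<alpha>)"

definition HH :: "nat \<Rightarrow> 'f::field \<Rightarrow> nat \<Rightarrow> aut set" where
  "HH n \<alpha> j = iota n \<alpha> ` {\<beta>. tr n (\<alpha> ^ j * \<beta>) = 0}"

definition MK :: "nat \<Rightarrow> 'f::field \<Rightarrow> nat \<Rightarrow> aut set \<Rightarrow> (triple \<times> iword) set set" where
  "MK n \<alpha> m K = (\<Inter>g\<in>K. Um n \<alpha> m g) - (\<Union>h\<in>N0 n \<alpha> - K. Um n \<alpha> m h)"

end

theory Submission
  imports Defs "HOL-Computational_Algebra.Primes" "HOL-Computational_Algebra.Polynomial"
begin

text \<open>Both choices of \<open>K\<close> are level sets \<open>{\<iota>(\<beta>). Tr(\<alpha>\<^sup>j\<beta>) = c}\<close> of the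
  \<open>\<bbbF>\<^sub>2\<close>-linear functional \<open>\<beta> \<mapsto> Tr(\<alpha>\<^sup>j\<beta>)\<close>. Suppose a germ
  \<open>[(\<emptyset>, \<iota>(\<gamma>), \<emptyset>), w]\<close> with \<open>\<iota>(\<gamma>) \<notin> K\<close> also equals \<open>[(\<emptyset>, \<iota>(\<beta>), \<emptyset>), w']\<close>
  for every \<open>\<iota>(\<beta>) \<in> K\<close>. Then \<open>w' = w\<close> and \<open>\<iota>(\<gamma>)\<close>, \<open>\<iota>(\<beta>)\<close> agree on all words
  extending a prefix of \<open>w\<close>, and comparing them on a word that leaves the ray \<open>1\<^sup>\<infinity>\<close>
  gives \<open>Tr(\<alpha>\<^sup>i\<gamma>) = Tr(\<alpha>\<^sup>i\<beta>)\<close> for a level \<open>i\<close> depending on \<open>w\<close> only. So the linear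
  functional \<open>Tr(\<alpha>\<^sup>i \<cdot>)\<close> is constant on a level set of \<open>Tr(\<alpha>\<^sup>j \<cdot>)\<close> and on a point
  outside it, hence constant on the whole field, hence zero; but the trace is onto
  \<open>\<bbbF>\<^sub>2\<close>.\<close>

section \<open>Finite fields of characteristic 2 and their trace\<close>

lemma finite_field_power_card_minus_one:
  fixes x :: "'f::{field,finite}"
  assumes "x \<noteq> 0"
  shows "x ^ (card (UNIV :: 'f set) - 1) = 1"
proof -
  let ?U = "UNIV - {0::'f}"
  have "(\<Prod>y\<in>?U. x * y) = (\<Prod>y\<in>?U. y)"
    by (rule prod.reindex_bij_witness[of _ "\<lambda>y. y / x" "\<lambda>y. x * y"]) (use assms in auto)
  moreover have "(\<Prod>y\<in>?U. x * y) = x ^ card ?U * (\<Prod>y\<in>?U. y)"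
    by (simp add: prod.distrib)
  moreover have "card ?U = card (UNIV :: 'f set) - 1"
    by (simp add: card_Diff_singleton)
  ultimately show ?thesis
    by simp
qed

lemma finite_field_power_card:
  fixes x :: "'f::{field,finite}"
  shows "x ^ card (UNIV :: 'f set) = x"
proof (cases "x = 0")
  case False
  have "card (UNIV :: 'f set) = Suc (card (UNIV :: 'f set) - 1)"
    using card_gt_0_iff[of "UNIV :: 'f set"] by simp
  then have "x ^ card (UNIV :: 'f set) = x * x ^ (card (UNIV :: 'f set) - 1)"
    by (metis power_Suc)
  then show ?thesis
    using finite_field_power_card_minus_one[OF False] by simp
qed (simp add: card_gt_0_iff)

lemma CHAR_eq_2_if_card_power_2:
  assumes "card (UNIV :: 'f::{field,finite} set) = 2 ^ n" "n \<ge> 1"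
  shows "CHAR('f) = 2"
proof -
  have "(-1::'f) = (-1) ^ card (UNIV :: 'f set)"
    by (simp add: finite_field_power_card)
  also have "\<dots> = 1"
    using assms(2) by (intro neg_one_even_power) (simp add: assms(1))
  finally have "of_nat 2 = (0::'f)"
    by (simp add: eq_neg_iff_add_eq_0)
  then have "CHAR('f) dvd 2"
    by (simp only: of_nat_eq_0_iff_char_dvd)
  moreover have "CHAR('f) \<noteq> 1"
    using of_nat_CHAR[where 'a = 'f] by (intro notI) simp
  moreover have "CHAR('f) \<noteq> 0"
    using \<open>CHAR('f) dvd 2\<close> by (intro notI) simp
  ultimately show ?thesis
    using dvd_imp_le[of "CHAR('f)" 2] by linarith
qed

lemma tr_add:
  fixes x y :: "'f::field"
  assumes "CHAR('f) = 2"
  shows "tr n (x + y) = tr n x + tr n y"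
proof -
  have "(x + y) ^ 2 ^ i = x ^ 2 ^ i + y ^ 2 ^ i" for i
    by (rule freshmans_dream') (simp_all add: assms)
  then show ?thesis
    by (simp add: tr_def sum.distrib)
qed

lemma additive_tr_mult:
  fixes c :: "'f::field"
  assumes "CHAR('f) = 2"
  shows "additive (\<lambda>\<beta>. tr n (c * \<beta>))"
  by unfold_locales (simp add: distrib_left tr_add[OF assms])

lemma tr_square:
  fixes x :: "'f::{field,finite}"
  assumes "card (UNIV :: 'f set) = 2 ^ n" "n \<ge> 1"
  shows "(tr n x) ^ 2 = tr n x"
proof -
  let ?f = "\<lambda>i. x ^ 2 ^ i"
  have "(tr n x) ^ 2 = (\<Sum>i<n. ?f i ^ 2)"
    unfolding tr_def
    by (rule freshmans_dream_sum'[where n = 1]) (simp_all add: CHAR_eq_2_if_card_power_2[OF assms])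
  also have "\<dots> = (\<Sum>i<n. ?f (Suc i))"
    by (simp add: power_mult[symmetric] mult.commute)
  also have "\<dots> = (\<Sum>i<n. ?f i) + ?f n - ?f 0"
    using sum.lessThan_Suc_shift[of ?f n] sum.lessThan_Suc[of ?f n] by (simp add: algebra_simps)
  also have "?f n = x"
    using finite_field_power_card[of x] assms(1) by simp
  finally show ?thesis
    by (simp add: tr_def)
qed

lemma tr_eq_0_or_1:
  fixes x :: "'f::{field,finite}"
  assumes "card (UNIV :: 'f set) = 2 ^ n" "n \<ge> 1"
  shows "tr n x = 0 \<or> tr n x = 1"
proof -
  have "tr n x * (tr n x - 1) = 0"
    using tr_square[OF assms, of x] by (simp add: power2_eq_square algebra_simps)
  then show ?thesis
    by simp
qed

text \<open>The trace is a polynomial of degree \<open>2 ^ (n - 1)\<close> in \<open>x\<close>, so it cannot vanish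
  on all \<open>2 ^ n\<close> elements of the field.\<close>
lemma tr_mult_surj:
  fixes c :: "'f::{field,finite}"
  assumes "card (UNIV :: 'f set) = 2 ^ n" "n \<ge> 1" "c \<noteq> 0" "t = 0 \<or> t = 1"
  shows "\<exists>y. tr n (c * y) = t"
proof (cases "t = 0")
  case True
  then have "tr n (c * 0) = t"
    by (simp add: tr_def power_0_left)
  then show ?thesis ..
next
  case False
  define p :: "'f poly" where "p = (\<Sum>i<n. monom 1 (2 ^ i))"
  have poly_p: "poly p x = tr n x" for x
    by (simp add: p_def poly_sum poly_monom tr_def)
  have "coeff p (2 ^ (n - 1)) = (\<Sum>i<n. if 2 ^ i = (2::nat) ^ (n - 1) then 1 else 0)"
    by (simp add: p_def coeff_sum coeff_monom)
  also have "\<dots> = (\<Sum>i\<in>{n - 1}. 1)"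
    using assms(2) by (intro sum.mono_neutral_cong_right) auto
  finally have "p \<noteq> 0"
    by auto
  have "degree p \<le> 2 ^ (n - 1)"
    unfolding p_def by (rule degree_sum_le) (auto intro: order.trans[OF degree_monom_le])
  moreover have "2 ^ (n - 1) < (2::nat) ^ n"
    using assms(2) by simp
  ultimately have "card {x. poly p x = 0} < card (UNIV :: 'f set)"
    using card_poly_roots_bound[OF \<open>p \<noteq> 0\<close>] assms(1) by linarith
  then have "{x. poly p x = 0} \<noteq> UNIV"
    by auto
  then obtain z where "poly p z \<noteq> 0"
    by auto
  then have "tr n (c * (z / c)) = t"
    using tr_eq_0_or_1[OF assms(1,2), of z] poly_p[of z] assms(3,4) False by simp
  then show ?thesis ..
qed

section \<open>Words and the automorphisms \<open>\<iota>(\<beta>)\<close>\<close>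

lemma length_ones [simp]: "length (ones k) = k"
  by (simp add: ones_def)

lemma ones_add: "ones (k + l) = ones k @ ones l"
  by (simp add: ones_def replicate_add)

lemma ipref_add: "ipref (k + l) w = ipref k w @ map w [k..<k + l]"
  by (simp add: ipref_def upt_add_eq_append[of 0 k l])

lemma ipref_eq_ones: "(\<And>i. i < k \<Longrightarrow> w i) \<Longrightarrow> ipref k w = ones k"
  by (simp add: ipref_def ones_def list_eq_iff_nth_eq)

lemma ipref_Suc_first_False:
  assumes "\<And>l. l < i \<Longrightarrow> w l" "\<not> w i"
  shows "ipref (Suc i) w = ones i @ [False]"
  using ipref_eq_ones[of i w] assms by (simp add: ipref_def)

lemma a_aut_neq: "u \<noteq> [] \<Longrightarrow> a_aut u \<noteq> u"
  by (cases u) auto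

lemma take_a_aut_append: "take (length p) (a_aut (p @ v)) = a_aut p"
  by (cases p) auto

lemma take_iota_append: "take (length p) (iota n \<alpha> \<beta> (p @ v)) = iota n \<alpha> \<beta> p"
  by (induction p arbitrary: \<beta>) (auto simp: take_a_aut_append)

lemma iota_append: "iota n \<alpha> \<beta> (p @ v) = iota n \<alpha> \<beta> p @ restr (iota n \<alpha> \<beta>) p v"
proof -
  have "iota n \<alpha> \<beta> (p @ v) =
      take (length p) (iota n \<alpha> \<beta> (p @ v)) @ drop (length p) (iota n \<alpha> \<beta> (p @ v))"
    by (rule append_take_drop_id[symmetric])
  then show ?thesis
    by (simp only: take_iota_append restr_def)
qed

lemma iota_ones_False:
  "iota n \<alpha> \<beta> (ones l @ False # u) =
     ones l @ False # (if tr n (\<alpha> ^ l * \<beta>) = 1 then a_aut u else u)"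
  by (induction l arbitrary: \<beta>) (auto simp: ones_def mult_ac)

lemma iota_eq_imp_tr_iff:
  assumes "iota n \<alpha> \<gamma> (ones l @ False # u) = iota n \<alpha> \<beta> (ones l @ False # u)" "u \<noteq> []"
  shows "tr n (\<alpha> ^ l * \<gamma>) = 1 \<longleftrightarrow> tr n (\<alpha> ^ l * \<beta>) = 1"
  using assms a_aut_neq[of u] by (auto simp: iota_ones_False split: if_splits)

section \<open>Germs of the automorphisms \<open>\<iota>(\<beta>)\<close>\<close>

lemma germ_eq_iota_imp_eq_on_extensions:
  assumes "germ_eq ([], iota n \<alpha> \<gamma>, []) w ([], iota n \<alpha> \<beta>, []) w"
  obtains k where "\<And>v. iota n \<alpha> \<gamma> (ipref k w @ v) = iota n \<alpha> \<beta> (ipref k w @ v)"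
proof -
  from assms obtain k where
    "iota n \<alpha> \<gamma> (ipref k w) = iota n \<alpha> \<beta> (ipref k w)"
    "restr (iota n \<alpha> \<gamma>) (ipref k w) = restr (iota n \<alpha> \<beta>) (ipref k w)"
    unfolding germ_eq_def by auto
  then show thesis
    by (intro that[of k]) (simp add: iota_append)
qed

text \<open>Germ equality of \<open>\<iota>(\<gamma>)\<close> and \<open>\<iota>(\<beta>)\<close> at \<open>w\<close> is tested on a word that follows
  \<open>w\<close> long enough and then turns to \<open>0\<close>: if \<open>w\<close> has a first \<open>0\<close>, at position \<open>i\<close>, that
  test sees the trace at level \<open>i\<close>; if \<open>w = 1\<^sup>\<infinity>\<close>, the level can be chosen
  arbitrarily large, and periodicity of the powers of \<open>\<alpha>\<close> brings it back to level \<open>0\<close>.\<close>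
lemma germ_eq_iota_tr_level:
  fixes \<alpha> :: "'f::{field,finite}"
  assumes "\<alpha> \<noteq> 0"
  obtains i where "\<And>\<gamma> \<beta>. germ_eq ([], iota n \<alpha> \<gamma>, []) w ([], iota n \<alpha> \<beta>, []) w \<Longrightarrow>
    tr n (\<alpha> ^ i * \<gamma>) = 1 \<longleftrightarrow> tr n (\<alpha> ^ i * \<beta>) = 1"
proof (cases "\<forall>l. w l")
  case True
  define d where "d = card (UNIV :: 'f set) - 1"
  have "card {0, 1 :: 'f} \<le> card (UNIV :: 'f set)"
    by (rule card_mono) auto
  then have "d \<ge> 1"
    by (simp add: d_def)
  show thesis
  proof (rule that[of 0])
    fix \<gamma> \<beta>
    assume "germ_eq ([], iota n \<alpha> \<gamma>, []) w ([], iota n \<alpha> \<beta>, []) w"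
    then obtain k where ext: "\<And>v. iota n \<alpha> \<gamma> (ipref k w @ v) = iota n \<alpha> \<beta> (ipref k w @ v)"
      by (rule germ_eq_iota_imp_eq_on_extensions) blast
    have test_word: "ipref k w @ ones (d * k - k) @ [False, False] = ones (d * k) @ False # [False]"
      using ipref_eq_ones[of k w] True \<open>d \<ge> 1\<close> ones_add[of k "d * k - k"] by simp
    have "iota n \<alpha> \<gamma> (ones (d * k) @ False # [False]) = iota n \<alpha> \<beta> (ones (d * k) @ False # [False])"
      using ext[of "ones (d * k - k) @ [False, False]"] by (simp only: test_word)
    then have "tr n (\<alpha> ^ (d * k) * \<gamma>) = 1 \<longleftrightarrow> tr n (\<alpha> ^ (d * k) * \<beta>) = 1"
      by (rule iota_eq_imp_tr_iff) simp
    moreover have "\<alpha> ^ (d * k) = 1"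
      using finite_field_power_card_minus_one[OF assms] by (simp add: d_def power_mult)
    ultimately show "tr n (\<alpha> ^ 0 * \<gamma>) = 1 \<longleftrightarrow> tr n (\<alpha> ^ 0 * \<beta>) = 1"
      by simp
  qed
next
  case False
  define i where "i = (LEAST l. \<not> w l)"
  have first_False: "\<not> w i"
    using False unfolding i_def by (metis LeastI_ex)
  have ones_before: "w l" if "l < i" for l
    using that unfolding i_def by (rule not_less_Least[where P = "\<lambda>l. \<not> w l", simplified])
  show thesis
  proof (rule that[of i])
    fix \<gamma> \<beta>
    assume "germ_eq ([], iota n \<alpha> \<gamma>, []) w ([], iota n \<alpha> \<beta>, []) w"
    then obtain k where ext: "\<And>v. iota n \<alpha> \<gamma> (ipref k w @ v) = iota n \<alpha> \<beta> (ipref k w @ v)"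
      by (rule germ_eq_iota_imp_eq_on_extensions) blast
    define u where "u = map w [Suc i..<Suc i + k] @ [False]"
    have "ipref k w @ map w [k..<k + Suc i] = ipref (k + Suc i) w"
      by (rule ipref_add[symmetric])
    also have "\<dots> = ipref (Suc i) w @ map w [Suc i..<Suc i + k]"
      by (subst add.commute) (rule ipref_add)
    also have "\<dots> = ones i @ False # map w [Suc i..<Suc i + k]"
      using ipref_Suc_first_False[of i w, OF ones_before first_False] by simp
    finally have test_word: "ipref k w @ map w [k..<k + Suc i] @ [False] = ones i @ False # u"
      unfolding u_def by (metis append_assoc append_Cons)
    have "iota n \<alpha> \<gamma> (ones i @ False # u) = iota n \<alpha> \<beta> (ones i @ False # u)"
      using ext[of "map w [k..<k + Suc i] @ [False]"] by (simp only: test_word)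
    then show "tr n (\<alpha> ^ i * \<gamma>) = 1 \<longleftrightarrow> tr n (\<alpha> ^ i * \<beta>) = 1"
      by (rule iota_eq_imp_tr_iff) (simp add: u_def)
  qed
qed

lemma germ_iota_self: "(([], iota n \<alpha> \<beta>, []), w) \<in> germ n \<alpha> ([], iota n \<alpha> \<beta>, []) w"
proof -
  have "w \<in> cyl []"
    unfolding cyl_def conc_def by auto
  moreover have "germ_eq ([], iota n \<alpha> \<beta>, []) w ([], iota n \<alpha> \<beta>, []) w"
    unfolding germ_eq_def by (auto intro!: exI[of _ 0] simp: ipref_def)
  ultimately show ?thesis
    unfolding germ_def valid_triple_def by (auto intro: GG_iota)
qed

lemma germ_iota_eq_imp_germ_eq:
  assumes "germ n \<alpha> ([], iota n \<alpha> \<beta>, []) w' = germ n \<alpha> ([], iota n \<alpha> \<gamma>, []) w"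
  shows "germ_eq ([], iota n \<alpha> \<gamma>, []) w ([], iota n \<alpha> \<beta>, []) w"
proof -
  have "(([], iota n \<alpha> \<beta>, []), w') \<in> germ n \<alpha> ([], iota n \<alpha> \<gamma>, []) w"
    using germ_iota_self[of n \<alpha> \<beta> w'] assms by simp
  then have "germ_eq ([], iota n \<alpha> \<gamma>, []) w ([], iota n \<alpha> \<beta>, []) w'"
    by (simp add: germ_def)
  moreover from this have "w' = w"
    by (simp add: germ_eq_def)
  ultimately show ?thesis
    by simp
qed

lemma Um_iota_common_tr_level:
  fixes \<alpha> :: "'f::{field,finite}"
  assumes "\<alpha> \<noteq> 0" "x \<in> Um n \<alpha> m (iota n \<alpha> \<gamma>)"
  obtains i where
    "\<And>\<beta>. x \<in> Um n \<alpha> m (iota n \<alpha> \<beta>) \<Longrightarrow> tr n (\<alpha> ^ i * \<gamma>) = 1 \<longleftrightarrow> tr n (\<alpha> ^ i * \<beta>) = 1"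
proof -
  obtain w where x: "x = germ n \<alpha> ([], iota n \<alpha> \<gamma>, []) w"
    using assms(2) by (auto simp: Um_def Theta_def)
  obtain i where level: "\<And>\<gamma> \<beta>. germ_eq ([], iota n \<alpha> \<gamma>, []) w ([], iota n \<alpha> \<beta>, []) w \<Longrightarrow>
      tr n (\<alpha> ^ i * \<gamma>) = 1 \<longleftrightarrow> tr n (\<alpha> ^ i * \<beta>) = 1"
    using germ_eq_iota_tr_level[OF assms(1)] by blast
  show thesis
  proof (rule that[of i])
    fix \<beta>
    assume "x \<in> Um n \<alpha> m (iota n \<alpha> \<beta>)"
    then obtain w' where "x = germ n \<alpha> ([], iota n \<alpha> \<beta>, []) w'"
      by (auto simp: Um_def Theta_def)
    then have "germ_eq ([], iota n \<alpha> \<gamma>, []) w ([], iota n \<alpha> \<beta>, []) w"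
      using x by (simp add: germ_iota_eq_imp_germ_eq)
    then show "tr n (\<alpha> ^ i * \<gamma>) = 1 \<longleftrightarrow> tr n (\<alpha> ^ i * \<beta>) = 1"
      by (rule level)
  qed
qed

section \<open>Level sets of the trace functionals\<close>

lemma additive_eq_0_if_constant_on_level_set:
  fixes \<phi> :: "'a::ab_group_add \<Rightarrow> 'b::ab_group_add" and \<psi> :: "'a \<Rightarrow> 'c::ab_group_add"
  assumes "additive \<phi>" "additive \<psi>"
    and two_values: "\<And>y. \<phi> y = c \<or> \<phi> y = \<phi> \<gamma>"
    and "\<phi> b = c"
    and const_on_level_set: "\<And>y. \<phi> y = c \<Longrightarrow> \<psi> y = \<psi> \<gamma>"
  shows "\<psi> y = 0"
proof -
  interpret \<phi>: additive \<phi> by fact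
  interpret \<psi>: additive \<psi> by fact
  have kernel: "\<psi> z = 0" if "\<phi> z = 0" for z
  proof -
    have "\<phi> (z + b) = c"
      using that \<open>\<phi> b = c\<close> by (simp add: \<phi>.add)
    then have "\<psi> (z + b) = \<psi> b"
      using const_on_level_set \<open>\<phi> b = c\<close> by simp
    then show ?thesis
      by (simp add: \<psi>.add)
  qed
  have psi_constant: "\<psi> z = \<psi> \<gamma>" for z
  proof (cases "\<phi> z = c")
    case False
    then have "\<phi> (z - \<gamma>) = 0"
      using two_values[of z] by (simp add: \<phi>.diff)
    then show ?thesis
      using kernel[of "z - \<gamma>"] by (simp add: \<psi>.diff)
  qed (rule const_on_level_set)
  then show ?thesis
    using psi_constant[of 0] by (simp add: \<psi>.zero)
qed

lemma iota_eq_imp_tr_eq: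
  fixes \<beta> \<gamma> :: "'f::{field,finite}"
  assumes "card (UNIV :: 'f set) = 2 ^ n" "n \<ge> 1" "iota n \<alpha> \<gamma> = iota n \<alpha> \<beta>"
  shows "tr n (\<alpha> ^ l * \<gamma>) = tr n (\<alpha> ^ l * \<beta>)"
proof -
  have "tr n (\<alpha> ^ l * \<gamma>) = 1 \<longleftrightarrow> tr n (\<alpha> ^ l * \<beta>) = 1"
    by (rule iota_eq_imp_tr_iff[of n \<alpha> \<gamma> l "[False]"]) (simp_all add: assms(3))
  then show ?thesis
    using tr_eq_0_or_1[OF assms(1,2), of "\<alpha> ^ l * \<gamma>"] tr_eq_0_or_1[OF assms(1,2), of "\<alpha> ^ l * \<beta>"]
    by auto
qed

lemma N0_diff_HH:
  fixes \<alpha> :: "'f::{field,finite}"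
  assumes "card (UNIV :: 'f set) = 2 ^ n" "n \<ge> 1"
  shows "N0 n \<alpha> - HH n \<alpha> j = iota n \<alpha> ` {\<beta>. tr n (\<alpha> ^ j * \<beta>) = 1}"
proof
  show "N0 n \<alpha> - HH n \<alpha> j \<subseteq> iota n \<alpha> ` {\<beta>. tr n (\<alpha> ^ j * \<beta>) = 1}"
    using tr_eq_0_or_1[OF assms] by (auto simp: N0_def HH_def)
  show "iota n \<alpha> ` {\<beta>. tr n (\<alpha> ^ j * \<beta>) = 1} \<subseteq> N0 n \<alpha> - HH n \<alpha> j"
  proof (clarsimp simp: N0_def HH_def)
    fix \<beta> \<beta>'
    assume "tr n (\<alpha> ^ j * \<beta>) = 1" "iota n \<alpha> \<beta> = iota n \<alpha> \<beta>'" "tr n (\<alpha> ^ j * \<beta>') = 0"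
    then show False
      using iota_eq_imp_tr_eq[OF assms, of \<alpha> \<beta> \<beta>' j] by simp
  qed
qed

lemma Um_level_set_disjoint:
  fixes \<alpha> :: "'f::{field,finite}"
  assumes "card (UNIV :: 'f set) = 2 ^ n" "n \<ge> 1" "\<alpha> \<noteq> 0"
    and K: "K = iota n \<alpha> ` {\<beta>. tr n (\<alpha> ^ j * \<beta>) = c}" and "c = 0 \<or> c = 1"
    and h: "h \<in> N0 n \<alpha> - K" and "x \<in> Um n \<alpha> m h"
  shows "x \<notin> (\<Inter>g\<in>K. Um n \<alpha> m g)"
proof
  assume x_K: "x \<in> (\<Inter>g\<in>K. Um n \<alpha> m g)"
  obtain \<gamma> where h_\<gamma>: "h = iota n \<alpha> \<gamma>"
    using h by (auto simp: N0_def)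
  have "x \<in> Um n \<alpha> m (iota n \<alpha> \<gamma>)"
    using \<open>x \<in> Um n \<alpha> m h\<close> h_\<gamma> by simp
  then obtain i where level:
    "\<And>\<beta>. x \<in> Um n \<alpha> m (iota n \<alpha> \<beta>) \<Longrightarrow> tr n (\<alpha> ^ i * \<gamma>) = 1 \<longleftrightarrow> tr n (\<alpha> ^ i * \<beta>) = 1"
    by (rule Um_iota_common_tr_level[OF assms(3)]) blast
  note tr_values = tr_eq_0_or_1[OF assms(1,2)]
  have "tr n (\<alpha> ^ j * \<gamma>) \<noteq> c"
    using h K h_\<gamma> by auto
  then have two_values: "tr n (\<alpha> ^ j * y) = c \<or> tr n (\<alpha> ^ j * y) = tr n (\<alpha> ^ j * \<gamma>)" for y
    using tr_values[of "\<alpha> ^ j * y"] tr_values[of "\<alpha> ^ j * \<gamma>"] \<open>c = 0 \<or> c = 1\<close> by auto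
  have const_on_level_set: "tr n (\<alpha> ^ i * \<beta>) = tr n (\<alpha> ^ i * \<gamma>)" if "tr n (\<alpha> ^ j * \<beta>) = c" for \<beta>
  proof -
    have "x \<in> Um n \<alpha> m (iota n \<alpha> \<beta>)"
      using x_K K that by blast
    then have "tr n (\<alpha> ^ i * \<gamma>) = 1 \<longleftrightarrow> tr n (\<alpha> ^ i * \<beta>) = 1"
      by (rule level)
    then show ?thesis
      using tr_values[of "\<alpha> ^ i * \<beta>"] tr_values[of "\<alpha> ^ i * \<gamma>"] by auto
  qed
  obtain b where "tr n (\<alpha> ^ j * b) = c"
    using tr_mult_surj[OF assms(1,2) power_not_zero[OF assms(3)] \<open>c = 0 \<or> c = 1\<close>] by blast
  have char_2: "CHAR('f) = 2"
    by (rule CHAR_eq_2_if_card_power_2[OF assms(1,2)])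
  have "tr n (\<alpha> ^ i * y) = 0" for y
    using additive_tr_mult[OF char_2, where c = "\<alpha> ^ j"] additive_tr_mult[OF char_2, where c = "\<alpha> ^ i"]
      two_values \<open>tr n (\<alpha> ^ j * b) = c\<close> const_on_level_set
    by (rule additive_eq_0_if_constant_on_level_set)
  then show False
    using tr_mult_surj[OF assms(1,2) power_not_zero[OF assms(3)], of 1 i] by simp
qed

lemma generator_neq_0:
  fixes \<alpha> :: "'f::{field,finite}"
  assumes "card (UNIV :: 'f set) > 2" "\<forall>\<beta>::'f. \<beta> \<noteq> 0 \<longrightarrow> (\<exists>k. \<beta> = \<alpha> ^ k)"
  shows "\<alpha> \<noteq> 0"
proof
  assume "\<alpha> = 0"
  have "x \<in> {0, 1}" for x :: 'f
  proof (cases "x = 0")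
    case False
    then obtain k where "x = \<alpha> ^ k"
      using assms(2) by blast
    then show ?thesis
      using \<open>\<alpha> = 0\<close> by (simp add: power_0_left)
  qed simp
  then have "UNIV = {0, 1 :: 'f}"
    by blast
  then have "card (UNIV :: 'f set) = card {0, 1 :: 'f}"
    by (rule arg_cong)
  then show False
    using assms(1) by simp
qed

theorem mainTheorem5:
  fixes \<alpha> :: "'f::{field, finite}" and n m j :: nat and K :: "aut set"
  assumes "n \<ge> 2"
    and "card (UNIV :: 'f set) = 2 ^ n"
    and "\<forall>\<beta>::'f. \<beta> \<noteq> 0 \<longrightarrow> (\<exists>k. \<beta> = \<alpha> ^ k)"
    and "m \<ge> 1"
    and "j \<le> 2 ^ n - 2"
    and "K = HH n \<alpha> j \<or> K = N0 n \<alpha> - HH n \<alpha> j"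
  shows "MK n \<alpha> m K = (\<Inter>g\<in>K. Um n \<alpha> m g)"
proof -
  have "n \<ge> 1"
    using assms(1) by simp
  have "(2::nat) ^ 2 \<le> 2 ^ n"
    using assms(1) by (rule power_increasing) simp
  then have "\<alpha> \<noteq> 0"
    using assms(2,3) by (intro generator_neq_0) simp_all
  obtain c where K: "K = iota n \<alpha> ` {\<beta>. tr n (\<alpha> ^ j * \<beta>) = c}" and "c = 0 \<or> c = 1"
    using assms(6)
  proof
    assume "K = HH n \<alpha> j"
    then show thesis
      using that[of 0] by (simp add: HH_def)
  next
    assume "K = N0 n \<alpha> - HH n \<alpha> j"
    then show thesis
      using that[of 1] N0_diff_HH[OF assms(2) \<open>n \<ge> 1\<close>] by simp
  qed
  have "x \<notin> (\<Inter>g\<in>K. Um n \<alpha> m g)" if "h \<in> N0 n \<alpha> - K" "x \<in> Um n \<alpha> m h" for x h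
    using assms(2) \<open>n \<ge> 1\<close> \<open>\<alpha> \<noteq> 0\<close> K \<open>c = 0 \<or> c = 1\<close> that by (rule Um_level_set_disjoint)
  then show ?thesis
    unfolding MK_def by blast
qed

end
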